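(* If $r \geq 3$ and $t \geq 1$ are integers, then \[ \mathrm{ex}_r\bigl(n, \{C_2, C_3, K_{2,t+1}\}\bigr) \leq \frac{\sqrt{t}}{r(r-1)}\, n^{3/2} + \frac{n}{r}. \]
   Context: Let $G$ be a multigraph and $\mathcal{F}$ a hypergraph. $\mathcal{F}$ is a Berge-$G$ if there is a bijection $f: E(G) \to E(\mathcal{F})$ with $e \subseteq f(e)$ for every $e \in E(G)$. For a family $\mathcal{G}$ of multigraphs, a hypergraph $\mathcal{H}$ is $\mathcal{G}$-free if for every $G \in \mathcal{G}$, $\mathcal{H}$ contains no subhypergraph isomorphic to a Berge-$G$. $\mathrm{ex}_r(n,\mathcal{G})$ denotes the maximum number of edges in an $n$-vertex $r$-uniform $\mathcal{G}$-free hypergraph. $C_2$ is the multigraph consisting of two vertices joined by two parallel edges (so $C_2$-free means linear), $C_3$ is the triangle, and $K_{2,t+1}$ is the complete bipartite graph with parts of sizes $2$ and $t+1$. *)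

theory Defs
  imports Complex_Main
begin

text \<open>A (loopless) multigraph is given by a set of edge identifiers together with
  an endpoint map assigning to each edge identifier its 2-element set of endpoints.
  Parallel edges are distinct identifiers with the same endpoints. Vertices are
  naturals; the vertex set is the union of the endpoint sets (no isolated vertices
  are needed here).\<close>
type_synonym mgraph = "nat set \<times> (nat \<Rightarrow> nat set)"

definition mg_edges :: "mgraph \<Rightarrow> nat set" where "mg_edges G = fst G"
definition mg_ends :: "mgraph \<Rightarrow> nat \<Rightarrow> nat set" where "mg_ends G = snd G"
definition mg_verts :: "mgraph \<Rightarrow> nat set" where
  "mg_verts G = (\<Union>e\<in>mg_edges G. mg_ends G e)"

definition contains_berge :: "'a set set \<Rightarrow> mgraph \<Rightarrow> bool" where
  "contains_berge H G \<longleftrightarrow>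
     (\<exists>(\<phi>::nat \<Rightarrow> 'a) (\<psi>::nat \<Rightarrow> 'a set).
        inj_on \<phi> (mg_verts G) \<and> inj_on \<psi> (mg_edges G) \<and>
        (\<forall>e\<in>mg_edges G. \<psi> e \<in> H \<and> \<phi> ` (mg_ends G e) \<subseteq> \<psi> e))"

definition family_free :: "'a set set \<Rightarrow> mgraph set \<Rightarrow> bool" where
  "family_free H \<G> \<longleftrightarrow> (\<forall>G\<in>\<G>. \<not> contains_berge H G)"

definition uniform_hypergraph :: "nat \<Rightarrow> 'a set \<Rightarrow> 'a set set \<Rightarrow> bool" where
  "uniform_hypergraph r V H \<longleftrightarrow> (\<forall>e\<in>H. e \<subseteq> V \<and> card e = r)"

definition ex_r :: "nat \<Rightarrow> nat \<Rightarrow> mgraph set \<Rightarrow> nat" where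
  "ex_r r n \<G> = Max {card H | H :: nat set set.
      uniform_hypergraph r {..<n} H \<and> family_free H \<G>}"

definition C2 :: mgraph where "C2 = ({0, 1}, \<lambda>e. {0, 1})"

definition C3 :: mgraph where
  "C3 = ({0, 1, 2}, \<lambda>e. if e = 0 then {0, 1} else if e = 1 then {1, 2} else {0, 2})"

text \<open>K_{2,m}: parts {0,1} and {2,..,m+1}; edge identifier e < 2m joins
  e mod 2 and e div 2 + 2.\<close>
definition K2 :: "nat \<Rightarrow> mgraph" where
  "K2 m = ({..<2 * m}, \<lambda>e. {e mod 2, e div 2 + 2})"

end

theory Submission
  imports Defs "HOL-Analysis.Convex"
begin

text \<open>Count the Berge paths x, v, y of length two (two distinct edges through v, one
  containing x and one containing y). By linearity a vertex of degree d is the middle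
  vertex of d (d - 1) (r - 1)^2 of them. Conversely, in a linear triangle-free hypergraph
  no edge contains both ends x and y, and the legs of paths with different middle vertices
  are all distinct, so t + 1 middle vertices for the same pair x, y would give a
  Berge-K_{2,t+1}. Summing over vertices and applying Cauchy-Schwarz to the degrees,
  whose sum is r |H|, yields the bound.\<close>

definition linear_hypergraph :: "'a set set \<Rightarrow> bool" where
  "linear_hypergraph H \<longleftrightarrow>
     (\<forall>h1\<in>H. \<forall>h2\<in>H. \<forall>x y. {x, y} \<subseteq> h1 \<and> {x, y} \<subseteq> h2 \<and> x \<noteq> y \<longrightarrow> h1 = h2)"

lemma linear_hypergraphD:
  "\<lbrakk>linear_hypergraph H; h1 \<in> H; h2 \<in> H; {x, y} \<subseteq> h1; {x, y} \<subseteq> h2; x \<noteq> y\<rbrakk> \<Longrightarrow> h1 = h2"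
  unfolding linear_hypergraph_def by blast

lemma linear_hypergraph_if_Berge_C2_free:
  assumes "\<not> contains_berge H C2"
  shows "linear_hypergraph H"
  unfolding linear_hypergraph_def
proof (intro ballI allI impI; rule ccontr)
  fix h1 h2 x y
  assume "h1 \<in> H" "h2 \<in> H" "{x, y} \<subseteq> h1 \<and> {x, y} \<subseteq> h2 \<and> x \<noteq> y" "h1 \<noteq> h2"
  then have "contains_berge H C2"
    unfolding contains_berge_def
    by (intro exI[of _ "\<lambda>i. if i = 0 then x else y"] exI[of _ "\<lambda>i. if i = 0 then h1 else h2"])
      (auto simp: C2_def mg_verts_def mg_edges_def mg_ends_def inj_on_def)
  with assms show False ..
qed

lemma contains_berge_C3I:
  assumes "distinct [a, b, c]" "distinct [h0, h1, h2]" "{h0, h1, h2} \<subseteq> H"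
    and "{a, b} \<subseteq> h0" "{b, c} \<subseteq> h1" "{a, c} \<subseteq> h2"
  shows "contains_berge H C3"
  unfolding contains_berge_def
  by (intro exI[of _ "\<lambda>i. if i = 0 then a else if i = 1 then b else c"]
      exI[of _ "\<lambda>i. if i = 0 then h0 else if i = 1 then h1 else h2"])
    (use assms in \<open>auto simp: C3_def mg_verts_def mg_edges_def mg_ends_def inj_on_def\<close>)

lemma contains_berge_K2I:
  assumes Z: "finite Z" "x \<notin> Z" "y \<notin> Z" and "x \<noteq> y"
    and inj: "inj_on A Z" "inj_on B Z" and disj: "A ` Z \<inter> B ` Z = {}"
    and edges: "\<And>v. v \<in> Z \<Longrightarrow> A v \<in> H \<and> B v \<in> H \<and> {x, v} \<subseteq> A v \<and> {y, v} \<subseteq> B v"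
  shows "contains_berge H (K2 (card Z))"
proof -
  define m where "m = card Z"
  obtain g where g: "bij_betw g {..<m} Z"
    using ex_bij_betw_nat_finite[OF Z(1)] by (auto simp: m_def atLeast0LessThan)
  have gZ: "g i \<in> Z" if "i < m" for i
    using g that by (auto dest: bij_betwE)
  define \<phi> where "\<phi> k = (if k = 0 then x else if k = 1 then y else g (k - 2))" for k
  define \<psi> where "\<psi> e = (if even e then A else B) (g (e div 2))" for e
  have "inj_on \<phi> {..<m + 2}"
  proof (rule inj_onI)
    fix k l assume kl: "k \<in> {..<m + 2}" "l \<in> {..<m + 2}" "\<phi> k = \<phi> l"
    have "\<phi> k \<in> Z \<longleftrightarrow> k \<ge> 2" "\<phi> l \<in> Z \<longleftrightarrow> l \<ge> 2"
      using kl(1,2) gZ[of "k - 2"] gZ[of "l - 2"] Z by (auto simp: \<phi>_def)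
    moreover have "g (k - 2) = g (l - 2) \<Longrightarrow> k - 2 = l - 2" if "k \<ge> 2" "l \<ge> 2"
      using bij_betw_imp_inj_on[OF g] kl that by (auto dest: inj_onD)
    ultimately show "k = l"
      using kl(3) \<open>x \<noteq> y\<close> by (auto simp: \<phi>_def split: if_splits)
  qed
  moreover have "mg_verts (K2 m) \<subseteq> {..<m + 2}"
    by (auto simp: K2_def mg_verts_def mg_edges_def mg_ends_def)
  ultimately have inj_\<phi>: "inj_on \<phi> (mg_verts (K2 m))"
    by (rule inj_on_subset)
  have inj_Ag: "inj_on (A \<circ> g) {..<m}" and inj_Bg: "inj_on (B \<circ> g) {..<m}"
    using inj bij_betw_imp_inj_on[OF g] bij_betw_imp_surj_on[OF g] by (auto intro: comp_inj_on)
  have inj_\<psi>: "inj_on \<psi> (mg_edges (K2 m))"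
  proof (rule inj_onI)
    fix e f assume ef: "e \<in> mg_edges (K2 m)" "f \<in> mg_edges (K2 m)" "\<psi> e = \<psi> f"
    then have lt: "e div 2 < m" "f div 2 < m"
      by (auto simp: K2_def mg_edges_def)
    have "even e = even f"
      using ef disj gZ[OF lt(1)] gZ[OF lt(2)] by (auto simp: \<psi>_def split: if_splits)
    moreover have "e div 2 = f div 2"
      using ef lt calculation inj_onD[OF inj_Ag] inj_onD[OF inj_Bg]
      by (cases "even e") (auto simp: \<psi>_def)
    ultimately show "e = f"
      by (metis div_mult_mod_eq mod2_eq_if)
  qed
  have "\<psi> e \<in> H \<and> \<phi> ` mg_ends (K2 m) e \<subseteq> \<psi> e" if "e \<in> mg_edges (K2 m)" for e
  proof -
    have "g (e div 2) \<in> Z"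
      using that gZ by (auto simp: K2_def mg_edges_def)
    then show ?thesis
      using edges by (auto simp: \<phi>_def \<psi>_def K2_def mg_ends_def elim: oddE)
  qed
  then show ?thesis
    unfolding contains_berge_def m_def[symmetric] using inj_\<phi> inj_\<psi> by blast
qed

definition cherry_centers :: "'a set set \<Rightarrow> 'a \<Rightarrow> 'a \<Rightarrow> 'a set" where
  "cherry_centers H x y =
     {v. \<exists>h1\<in>H. \<exists>h2\<in>H. h1 \<noteq> h2 \<and> {x, v} \<subseteq> h1 \<and> {y, v} \<subseteq> h2 \<and> x \<noteq> v \<and> y \<noteq> v}"

lemma cherry_ends_not_covered:
  assumes lin: "linear_hypergraph H" and C3: "\<not> contains_berge H C3"
    and v: "v \<in> cherry_centers H x y"
  shows "x \<noteq> y" and "\<forall>h\<in>H. \<not> {x, y} \<subseteq> h"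
proof -
  obtain h1 h2 where hs: "h1 \<in> H" "h2 \<in> H" "h1 \<noteq> h2" "{x, v} \<subseteq> h1" "{y, v} \<subseteq> h2" "x \<noteq> v" "y \<noteq> v"
    using v by (auto simp: cherry_centers_def)
  show xy: "x \<noteq> y"
    using hs linear_hypergraphD[OF lin, of h1 h2 x v] by auto
  show "\<forall>h\<in>H. \<not> {x, y} \<subseteq> h"
  proof (intro ballI notI)
    fix h assume h: "h \<in> H" and xyh: "{x, y} \<subseteq> h"
    have "h \<noteq> h1" "h \<noteq> h2"
      using xyh hs xy linear_hypergraphD[OF lin, of h1 h2] by (auto simp: insert_commute)
    then have "contains_berge H C3"
      using hs xy xyh h by (intro contains_berge_C3I[of v x y h1 h h2]) auto
    with C3 show False ..
  qed
qed

lemma cherry_legs_inj: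
  assumes lin: "linear_hypergraph H" and C3: "\<not> contains_berge H C3"
    and sep: "\<And>h. h \<in> H \<Longrightarrow> \<not> {x, y} \<subseteq> h"
    and legs: "\<And>v. v \<in> Z \<Longrightarrow> A v \<in> H \<and> B v \<in> H \<and> {x, v} \<subseteq> A v \<and> {y, v} \<subseteq> B v \<and> y \<noteq> v"
  shows "inj_on A Z"
proof (rule inj_onI, rule ccontr)
  fix u w assume uw: "u \<in> Z" "w \<in> Z" "A u = A w" "u \<noteq> w"
  have "B u \<noteq> B w"
    using uw legs[OF uw(1)] legs[OF uw(2)] sep[of "A u"] linear_hypergraphD[OF lin, of "A u" "B u" u w]
    by auto
  then have "contains_berge H C3"
    using uw legs[OF uw(1)] legs[OF uw(2)] sep[of "A u"]
    by (intro contains_berge_C3I[of u w y "A u" "B w" "B u"]) auto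
  with C3 show False ..
qed

lemma card_cherry_centers_le:
  assumes lin: "linear_hypergraph H" and C3: "\<not> contains_berge H C3"
    and K: "\<not> contains_berge H (K2 (t + 1))"
  shows "card (cherry_centers H x y) \<le> t"
proof (rule ccontr)
  assume "\<not> ?thesis"
  then obtain Z where Z: "Z \<subseteq> cherry_centers H x y" "card Z = t + 1" "finite Z"
    by (metis Suc_eq_plus1 not_less_eq_eq obtain_subset_with_card_n)
  then obtain v0 where "v0 \<in> cherry_centers H x y"
    by fastforce
  note sep = cherry_ends_not_covered[OF lin C3 this]
  have "\<forall>v\<in>Z. \<exists>a b. a \<in> H \<and> b \<in> H \<and> {x, v} \<subseteq> a \<and> {y, v} \<subseteq> b \<and> x \<noteq> v \<and> y \<noteq> v"
    using Z(1) by (auto simp: cherry_centers_def)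
  then obtain A B where legs:
    "\<And>v. v \<in> Z \<Longrightarrow> A v \<in> H \<and> B v \<in> H \<and> {x, v} \<subseteq> A v \<and> {y, v} \<subseteq> B v \<and> x \<noteq> v \<and> y \<noteq> v"
    by metis
  have "inj_on A Z"
    using legs sep(2) by (intro cherry_legs_inj[OF lin C3, where B = B]) auto
  moreover have "inj_on B Z"
    using legs sep(2) by (intro cherry_legs_inj[OF lin C3, where x = y and y = x and B = A])
      (auto simp: insert_commute)
  moreover have "A ` Z \<inter> B ` Z = {}"
    using legs sep(2) by blast
  ultimately have "contains_berge H (K2 (card Z))"
    using legs sep(1) Z(3) by (intro contains_berge_K2I) auto
  with K Z(2) show False by simp
qed

definition degree :: "'a set set \<Rightarrow> 'a \<Rightarrow> nat" where
  "degree H v = card {h \<in> H. v \<in> h}"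

lemma finite_if_uniform_hypergraph:
  "finite V \<Longrightarrow> uniform_hypergraph r V H \<Longrightarrow> finite H"
  unfolding uniform_hypergraph_def by (meson PowI finite_Pow_iff finite_subset subsetI)

lemma sum_degree_eq:
  assumes V: "finite V" and U: "uniform_hypergraph r V H"
  shows "(\<Sum>v\<in>V. degree H v) = r * card H"
proof -
  have H: "finite H"
    using finite_if_uniform_hypergraph[OF V U] .
  have "(\<Sum>v\<in>V. degree H v) = (\<Sum>v\<in>V. \<Sum>h\<in>H. of_bool (v \<in> h))"
    using H by (simp add: degree_def Int_def)
  also have "\<dots> = (\<Sum>h\<in>H. \<Sum>v\<in>V. of_bool (v \<in> h))"
    by (rule sum.swap)
  also have "\<dots> = (\<Sum>h\<in>H. r)"
    using U V by (intro sum.cong refl) (auto simp: uniform_hypergraph_def Int_absorb1 Int_def[symmetric])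
  finally show ?thesis
    by simp
qed

lemma degree_cherries_le:
  assumes V: "finite V" and U: "uniform_hypergraph r V H" and lin: "linear_hypergraph H"
  shows "degree H v * (degree H v - 1) * (r - 1)^2
           \<le> card {(x, y) \<in> V \<times> V. v \<in> cherry_centers H x y}"
proof -
  define Hv where "Hv = {h \<in> H. v \<in> h}"
  define T where "T = (SIGMA h1:Hv. SIGMA h2:Hv - {h1}. (h1 - {v}) \<times> (h2 - {v}))"
  have Hv: "finite Hv" "card Hv = degree H v"
    using finite_if_uniform_hypergraph[OF V U] by (auto simp: Hv_def degree_def)
  have h: "finite h" "card (h - {v}) = r - 1" if "h \<in> Hv" for h
    using that U V by (auto simp: Hv_def uniform_hypergraph_def intro: rev_finite_subset)
  have "card T = (\<Sum>h1\<in>Hv. \<Sum>h2\<in>Hv - {h1}. card (h1 - {v}) * card (h2 - {v}))"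
    unfolding T_def using Hv h
    by (subst card_SigmaI) (auto intro!: sum.cong card_SigmaI simp: card_cartesian_product)
  also have "\<dots> = degree H v * (degree H v - 1) * (r - 1)^2"
    using Hv by (simp add: h power2_eq_square)
  finally have card_T: "card T = degree H v * (degree H v - 1) * (r - 1)^2" .
  \<comment> \<open>by linearity, (x, y) determines h1 and h2 as the edges through v and x, resp. v and y\<close>
  have "inj_on (\<lambda>(h1, h2, x, y). (x, y)) T"
  proof (rule inj_onI)
    fix p q assume pq: "p \<in> T" "q \<in> T" "(\<lambda>(h1, h2, x, y). (x, y)) p = (\<lambda>(h1, h2, x, y). (x, y)) q"
    obtain h1 h2 x y where p: "p = (h1, h2, x, y)"
      by (cases p)
    obtain h1' h2' x' y' where q: "q = (h1', h2', x', y')"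
      by (cases q)
    have xy: "x' = x" "y' = y"
      using pq(3) by (simp_all add: p q)
    have "h1 = h1'"
      using pq(1,2) by (intro linear_hypergraphD[OF lin, of h1 h1' v x]) (auto simp: p q xy T_def Hv_def)
    moreover have "h2 = h2'"
      using pq(1,2) by (intro linear_hypergraphD[OF lin, of h2 h2' v y]) (auto simp: p q xy T_def Hv_def)
    ultimately show "p = q"
      by (simp add: p q xy)
  qed
  moreover have "(x, y) \<in> V \<times> V \<and> v \<in> cherry_centers H x y" if "(h1, h2, x, y) \<in> T" for h1 h2 x y
  proof -
    have "h1 \<in> H" "h2 \<in> H" "h1 \<noteq> h2" "{x, v} \<subseteq> h1" "{y, v} \<subseteq> h2" "x \<noteq> v" "y \<noteq> v"
      using that by (auto simp: T_def Hv_def)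
    then show ?thesis
      using U unfolding cherry_centers_def uniform_hypergraph_def by blast
  qed
  then have "(\<lambda>(h1, h2, x, y). (x, y)) ` T \<subseteq> {(x, y) \<in> V \<times> V. v \<in> cherry_centers H x y}"
    by auto
  ultimately show ?thesis
    unfolding card_T[symmetric] using V by (intro card_inj_on_le) (auto intro: rev_finite_subset[of "V \<times> V"])
qed

lemma sum_degree_cherries_le:
  assumes V: "finite V" and U: "uniform_hypergraph r V H" and lin: "linear_hypergraph H"
    and bound: "\<And>x y. card (cherry_centers H x y) \<le> t"
  shows "(\<Sum>v\<in>V. degree H v * (degree H v - 1) * (r - 1)^2) \<le> t * card V ^ 2"
proof -
  have centers_sub: "cherry_centers H x y \<subseteq> V" for x y
    using U by (auto simp: cherry_centers_def uniform_hypergraph_def)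
  have "(\<Sum>v\<in>V. degree H v * (degree H v - 1) * (r - 1)^2)
          \<le> (\<Sum>v\<in>V. card {(x, y) \<in> V \<times> V. v \<in> cherry_centers H x y})"
    by (intro sum_mono degree_cherries_le[OF V U lin])
  also have "\<dots> = (\<Sum>v\<in>V. card {p \<in> V \<times> V. v \<in> cherry_centers H (fst p) (snd p)})"
    by (intro sum.cong refl arg_cong[where f = card]) auto
  also have "\<dots> = (\<Sum>v\<in>V. \<Sum>p\<in>V \<times> V. of_bool (v \<in> cherry_centers H (fst p) (snd p)))"
    using V by (simp add: Int_def)
  also have "\<dots> = (\<Sum>p\<in>V \<times> V. \<Sum>v\<in>V. of_bool (v \<in> cherry_centers H (fst p) (snd p)))"
    by (rule sum.swap)
  also have "\<dots> = (\<Sum>p\<in>V \<times> V. card (cherry_centers H (fst p) (snd p)))"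
    using V centers_sub by (simp add: Int_absorb1 Int_def[symmetric])
  also have "\<dots> \<le> (\<Sum>p\<in>V \<times> V. t)"
    by (intro sum_mono bound)
  also have "\<dots> = t * card V ^ 2"
    by (simp add: card_cartesian_product power2_eq_square)
  finally show ?thesis .
qed

lemma excess_le_of_moment_bounds:
  fixes R n D Q t :: real
  assumes R: "R > 0" and n: "n \<ge> 0" and t: "t \<ge> 0"
    and second_moment: "R^2 * (Q - D) \<le> t * n^2" and Cauchy_Schwarz: "D^2 \<le> n * Q"
  shows "D - n \<le> sqrt t * n powr (3/2) / R"
proof (cases "D \<le> n")
  case True
  moreover have "0 \<le> sqrt t * n powr (3/2) / R"
    using R t by simp
  ultimately show ?thesis
    by linarith
next
  case False
  have "R^2 * (D^2 - n * D) \<le> n * (R^2 * (Q - D))"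
    using Cauchy_Schwarz R n by (simp add: algebra_simps)
  also have "\<dots> \<le> t * n^3"
    using mult_left_mono[OF second_moment n] by (simp add: power2_eq_square power3_eq_cube ac_simps)
  finally have "R^2 * (D^2 - n * D) \<le> t * n^3" .
  moreover have "(D - n)^2 \<le> D^2 - n * D"
    using False n by (simp add: power2_eq_square algebra_simps mult_right_mono)
  ultimately have "(R * (D - n))^2 \<le> t * n^3"
    unfolding power_mult_distrib by (meson mult_left_mono order_trans zero_le_power2)
  then have "R * (D - n) \<le> sqrt (t * n^3)"
    by (rule real_le_rsqrt)
  also have "sqrt (t * n^3) = sqrt t * n powr (3/2)"
    using n by (cases "n = 0") (simp_all add: real_sqrt_mult powr_half_sqrt_powr powr_realpow)
  finally show ?thesis
    using R by (simp add: field_simps)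
qed

lemma card_le_if_linear_Berge_C3_K2_free:
  fixes H :: "'a set set"
  assumes r: "r \<ge> 2" and V: "finite V" and U: "uniform_hypergraph r V H"
    and lin: "linear_hypergraph H" and C3: "\<not> contains_berge H C3"
    and K: "\<not> contains_berge H (K2 (t + 1))"
  shows "real (card H)
           \<le> sqrt (real t) / (real r * (real r - 1)) * real (card V) powr (3/2) + real (card V) / real r"
proof -
  define n where "n = real (card V)"
  define R where "R = real r - 1"
  define D where "D = (\<Sum>v\<in>V. real (degree H v))"
  define Q where "Q = (\<Sum>v\<in>V. real (degree H v)^2)"
  have R: "R > 0" "real (r - 1) = R"
    using r by (auto simp: R_def of_nat_diff)
  have D: "D = real r * real (card H)"
    unfolding D_def using arg_cong[OF sum_degree_eq[OF V U], of real] by simp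
  have "real (degree H v * (degree H v - 1) * (r - 1)^2) = R^2 * (real (degree H v)^2 - real (degree H v))" for v
    unfolding of_nat_mult of_nat_power R(2)
    by (cases "degree H v = 0") (simp_all add: of_nat_diff power2_eq_square algebra_simps)
  then have "R^2 * (Q - D) = real (\<Sum>v\<in>V. degree H v * (degree H v - 1) * (r - 1)^2)"
    by (simp add: Q_def D_def sum_distrib_left sum_subtractf right_diff_distrib)
  also have "\<dots> \<le> real t * n^2"
    using sum_degree_cherries_le[OF V U lin card_cherry_centers_le[OF lin C3 K]]
    unfolding n_def by (metis of_nat_le_iff of_nat_mult of_nat_power)
  finally have second_moment: "R^2 * (Q - D) \<le> real t * n^2" .
  have "D^2 \<le> n * Q"
    unfolding D_def Q_def n_def using sum_squared_le_sum_of_squares by (simp add: mult.commute)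
  then have "real r * real (card H) \<le> n + sqrt (real t) * n powr (3/2) / R"
    using excess_le_of_moment_bounds[OF R(1) _ _ second_moment] by (simp add: n_def D)
  then have "real (card H) \<le> (n + sqrt (real t) * n powr (3/2) / R) / real r"
    using r by (simp add: pos_le_divide_eq mult.commute)
  also have "\<dots> = sqrt (real t) / (real r * R) * n powr (3/2) + n / real r"
    by (simp add: add_divide_distrib)
  finally show ?thesis
    unfolding n_def R_def .
qed

lemma ex_r_attained:
  assumes "\<forall>G\<in>\<G>. mg_edges G \<noteq> {}"
  obtains H where "uniform_hypergraph r {..<n} H" "family_free H \<G>" "ex_r r n \<G> = card H"
proof -
  let ?M = "{card H | H :: nat set set. uniform_hypergraph r {..<n} H \<and> family_free H \<G>}"
  have "?M \<subseteq> card ` Pow (Pow {..<n})"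
    unfolding uniform_hypergraph_def by auto
  then have "finite ?M"
    by (rule finite_subset) auto
  moreover have "card {} \<in> ?M"
    using assms by (intro CollectI exI[of _ "{}"])
      (auto simp: uniform_hypergraph_def family_free_def contains_berge_def)
  ultimately have "Max ?M \<in> ?M"
    by (intro Max_in) auto
  then show ?thesis
    using that unfolding ex_r_def by auto
qed

theorem theorem2p1:
  fixes r t n :: nat
  assumes "r \<ge> 3" and "t \<ge> 1"
  shows "real (ex_r r n {C2, C3, K2 (t + 1)})
           \<le> sqrt (real t) / (real r * (real r - 1)) * real n powr (3 / 2) + real n / real r"
proof -
  have "\<forall>G\<in>{C2, C3, K2 (t + 1)}. mg_edges G \<noteq> {}"
    by (auto simp: C2_def C3_def K2_def mg_edges_def)
  then obtain H where U: "uniform_hypergraph r {..<n} H"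
    and free: "family_free H {C2, C3, K2 (t + 1)}" and ex: "ex_r r n {C2, C3, K2 (t + 1)} = card H"
    by (rule ex_r_attained)
  have lin: "linear_hypergraph H" and C3: "\<not> contains_berge H C3"
    and K: "\<not> contains_berge H (K2 (t + 1))"
    using free by (auto simp: family_free_def intro: linear_hypergraph_if_Berge_C2_free)
  show ?thesis
    using card_le_if_linear_Berge_C3_K2_free[OF _ _ U lin C3 K] assms(1) ex by simp
qed

end
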